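(* Let $q$ be an odd prime power, $m\geq 2$ and $n=\frac{q^m-1}{2}$. Then the negacyclic BCH code $\mathcal{C}_{(q,n,2,0)}$, whose generator polynomial is $\mathbb{M}_{\beta}(x)$, has parameters $[n,n-m,d]$, where $d=3$ if $q=3$ and $d=2$ if $q\neq 3$, and it is distance-optimal with respect to the sphere-packing bound.
   Context: Let $\ell$ be the order of $q$ modulo $2n$, $\alpha$ a primitive element of $\mathrm{GF}(q^\ell)$, $\beta=\alpha^{(q^\ell-1)/(2n)}$ (a primitive $2n$-th root of unity), and $\mathbb{M}_{\beta}(x)$ the minimal polynomial of $\beta$ over $\mathrm{GF}(q)$. $\mathcal{C}_{(q,n,2,0)}$ is the negacyclic code of length $n$ over $\mathrm{GF}(q)$, i.e. the ideal of $\mathrm{GF}(q)[x]/(x^n+1)$ generated by $\mathbb{M}_{\beta}(x)$. An $[n,k,d]$ code over $\mathrm{GF}(q)$ is distance-optimal with respect to the sphere-packing bound if the sphere-packing bound shows that no $[n,k,d+1]$ linear code over $\mathrm{GF}(q)$ exists. *)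

theory Defs
  imports "HOL-Number_Theory.Pocklington" "HOL-Computational_Algebra.Polynomial"
begin

definition field_embedding :: "('a::field \<Rightarrow> 'b::field) \<Rightarrow> bool" where
  "field_embedding f \<longleftrightarrow> inj f \<and> f 0 = 0 \<and> f 1 = 1 \<and>
     (\<forall>x y. f (x + y) = f x + f y) \<and> (\<forall>x y. f (x * y) = f x * f y)"

definition primitive_element :: "'b::field \<Rightarrow> bool" where
  "primitive_element a \<longleftrightarrow> range (\<lambda>i::nat. a ^ i) = UNIV - {0}"

definition is_min_poly :: "('a::field \<Rightarrow> 'b::field) \<Rightarrow> 'b \<Rightarrow> 'a poly \<Rightarrow> bool" where
  "is_min_poly f b g \<longleftrightarrow> lead_coeff g = 1 \<and> poly (map_poly f g) b = 0 \<and>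
     (\<forall>h. h \<noteq> 0 \<and> poly (map_poly f h) b = 0 \<longrightarrow> degree g \<le> degree h)"

definition min_poly :: "('a::field \<Rightarrow> 'b::field) \<Rightarrow> 'b \<Rightarrow> 'a poly" where
  "min_poly f b = (THE g. is_min_poly f b g)"

text \<open>Words of length n are lists of length n; a codeword c_0 + ... + c_{n-1} x^{n-1}
  of GF(q)[x]/(x^n+1) is identified with its coefficient vector.\<close>
definition negacyclic_code :: "nat \<Rightarrow> 'a::field poly \<Rightarrow> 'a list set" where
  "negacyclic_code n g =
     {map (coeff ((g * h) mod (monom 1 n + 1))) [0..<n] | h. True}"

definition hamming_dist :: "'a list \<Rightarrow> 'a list \<Rightarrow> nat" where
  "hamming_dist x y = card {i. i < length x \<and> x ! i \<noteq> y ! i}"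

definition min_dist :: "'a list set \<Rightarrow> nat" where
  "min_dist C = Min {hamming_dist x y | x y. x \<in> C \<and> y \<in> C \<and> x \<noteq> y}"

definition linear_code :: "nat \<Rightarrow> 'a::field list set \<Rightarrow> bool" where
  "linear_code n C \<longleftrightarrow> C \<subseteq> {xs. length xs = n} \<and> replicate n 0 \<in> C \<and>
     (\<forall>x\<in>C. \<forall>y\<in>C. map2 (+) x y \<in> C) \<and> (\<forall>c. \<forall>x\<in>C. map ((*) c) x \<in> C)"

definition has_params :: "'a::{finite,field} list set \<Rightarrow> nat \<Rightarrow> nat \<Rightarrow> nat \<Rightarrow> bool" where
  "has_params C n k d \<longleftrightarrow> linear_code n C \<and> card C = card (UNIV :: 'a set) ^ k \<and> min_dist C = d"

definition distance_optimal :: "'a::{finite,field} itself \<Rightarrow> nat \<Rightarrow> nat \<Rightarrow> nat \<Rightarrow> bool" where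
  "distance_optimal _ n k d \<longleftrightarrow> \<not> (\<exists>C :: 'a list set. has_params C n k (d + 1))"

end

theory Submission
  imports Defs
begin

(* Since q^m = 2n + 1, the order of q modulo 2n is m, so GF(q^l) = GF(q^m) has 2n + 1 elements,
   beta = alpha is primitive and alpha^n = -1 is a root of x^n + 1. The code is therefore the
   set of words c with c_0 + c_1 alpha + ... + c_(n-1) alpha^(n-1) = 0; it has dimension n - m
   because every nonzero element of GF(q^m) is alpha^j or -alpha^j for some j < n.
   A codeword of weight two amounts to alpha^k lying in GF(q) for some 0 < k < n, which happens
   iff GF(q) has an element outside {0, 1, -1}, i.e. iff q > 3; for q = 3 the relation
   1 + alpha = +-alpha^j yields a codeword of weight three.
   For optimality, a linear [n, n - m, 3] code with q > 3 would violate the sphere-packing bound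
   q^(n-m) (1 + n (q - 1)) <= q^n, as q^m = 2n + 1; for q = 3 an [n, n - m, 4] code, punctured
   at its last coordinate, violates the same bound in length n - 1. *)

section \<open>Field embeddings and minimal polynomials\<close>

context
  fixes emb :: "'a::field \<Rightarrow> 'b::field"
  assumes emb: "field_embedding emb"
begin

lemma field_embedding_0 [simp]: "emb 0 = 0"
  and field_embedding_1 [simp]: "emb 1 = 1"
  and field_embedding_add [simp]: "emb (x + y) = emb x + emb y"
  and field_embedding_mult [simp]: "emb (x * y) = emb x * emb y"
  and field_embedding_eq_iff [simp]: "emb x = emb y \<longleftrightarrow> x = y"
  using emb unfolding field_embedding_def inj_def by blast+

lemma field_embedding_eq_0_iff [simp]: "emb x = 0 \<longleftrightarrow> x = 0"
  using field_embedding_eq_iff[of x 0] by simp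

lemma field_embedding_eq_1_iff [simp]: "emb x = 1 \<longleftrightarrow> x = 1"
  using field_embedding_eq_iff[of x 1] by simp

lemma field_embedding_minus [simp]: "emb (- x) = - emb x"
  using field_embedding_add[of x "- x"] by (simp add: eq_neg_iff_add_eq_0 add.commute)

lemma field_embedding_diff [simp]: "emb (x - y) = emb x - emb y"
  using field_embedding_add[of x "- y"] by simp

lemma field_embedding_divide [simp]: "emb (x / y) = emb x / emb y"
proof (cases "y = 0")
  case False
  then have "emb (x / y) * emb y = emb x"
    using field_embedding_mult[of "x / y" y] by simp
  then show ?thesis using False by (simp add: eq_divide_eq)
qed simp

lemma map_poly_field_embedding_diff:
  "map_poly emb (p - q) = map_poly emb p - map_poly emb q"
  by (intro poly_eqI) (simp add: coeff_map_poly)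

lemma poly_map_poly_field_embedding_mult:
  "poly (map_poly emb (p * q)) x = poly (map_poly emb p) x * poly (map_poly emb q) x"
proof (induction p)
  case (pCons a p)
  have "map_poly emb (pCons a p * q) = smult (emb a) (map_poly emb q) + pCons 0 (map_poly emb (p * q))"
    by (intro poly_eqI) (simp add: coeff_map_poly mult_pCons_left coeff_pCons split: nat.split)
  then show ?case
    using pCons.IH by (simp add: map_poly_pCons algebra_simps)
qed simp

lemma is_min_poly_nonzero: "is_min_poly emb b g \<Longrightarrow> g \<noteq> 0"
  unfolding is_min_poly_def by auto

lemma is_min_poly_exists:
  assumes "h \<noteq> 0" "poly (map_poly emb h) b = 0"
  obtains g where "is_min_poly emb b g"
proof -
  define P where "P = (\<lambda>h. h \<noteq> 0 \<and> poly (map_poly emb h) b = 0)"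
  obtain h0 where h0: "P h0" "\<And>h. P h \<Longrightarrow> degree h0 \<le> degree h"
    using ex_has_least_nat[of P h degree] assms unfolding P_def by blast
  have "is_min_poly emb b (smult (inverse (lead_coeff h0)) h0)"
    using h0 unfolding P_def is_min_poly_def by (auto simp: map_poly_smult)
  then show ?thesis by (rule that)
qed

lemma is_min_poly_dvd_iff:
  assumes g: "is_min_poly emb b g"
  shows "g dvd p \<longleftrightarrow> poly (map_poly emb p) b = 0"
proof
  assume "g dvd p"
  then show "poly (map_poly emb p) b = 0"
    using g poly_map_poly_field_embedding_mult unfolding is_min_poly_def by (auto elim!: dvdE)
next
  assume p: "poly (map_poly emb p) b = 0"
  have "p mod g = p - g * (p div g)"
    by (simp add: minus_mult_div_eq_mod)
  then have "poly (map_poly emb (p mod g)) b = 0"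
    using p g poly_map_poly_field_embedding_mult[of g "p div g" b]
    unfolding is_min_poly_def by (simp add: map_poly_field_embedding_diff)
  then have "p mod g = 0"
    using g degree_mod_less'[of g p] is_min_poly_nonzero[OF g]
    unfolding is_min_poly_def by (meson not_le)
  then show "g dvd p" by (simp add: mod_eq_0_iff_dvd)
qed

lemma is_min_poly_unique:
  assumes g: "is_min_poly emb b g" and g': "is_min_poly emb b g'"
  shows "g' = g"
proof (rule ccontr)
  assume "g' \<noteq> g"
  then have "g' - g \<noteq> 0" by simp
  moreover have "poly (map_poly emb (g' - g)) b = 0"
    using g g' unfolding is_min_poly_def by (simp add: map_poly_field_embedding_diff)
  ultimately have "degree g \<le> degree (g' - g)"
    using g unfolding is_min_poly_def by blast
  moreover have "degree g' = degree g"
    using g g' is_min_poly_nonzero unfolding is_min_poly_def by (meson le_antisym)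
  then have "degree (g' - g) < degree g"
    using g g' \<open>g' - g \<noteq> 0\<close> unfolding is_min_poly_def
    by (intro degree_less_if_less_eqI) (auto intro: degree_diff_le)
  ultimately show False by simp
qed

lemma min_poly_dvd_iff:
  assumes "h \<noteq> 0" "poly (map_poly emb h) b = 0"
  shows "min_poly emb b dvd p \<longleftrightarrow> poly (map_poly emb p) b = 0"
proof -
  obtain g where g: "is_min_poly emb b g"
    using is_min_poly_exists[OF assms] .
  then have "min_poly emb b = g"
    unfolding min_poly_def using is_min_poly_unique by blast
  then show ?thesis using is_min_poly_dvd_iff[OF g] by simp
qed

end

section \<open>Hamming distance and the sphere-packing bound\<close>

definition hamming_weight :: "'a::zero list \<Rightarrow> nat" where
  "hamming_weight c = card {i. i < length c \<and> c ! i \<noteq> 0}"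

lemma hamming_weight_eq_0_iff: "hamming_weight c = 0 \<longleftrightarrow> c = replicate (length c) 0"
  unfolding hamming_weight_def by (auto simp: list_eq_iff_nth_eq)

lemma hamming_weight_map_le:
  assumes "finite S" "\<And>i. i < n \<Longrightarrow> f i \<noteq> 0 \<Longrightarrow> i \<in> S"
  shows "hamming_weight (map f [0..<n]) \<le> card S"
  unfolding hamming_weight_def using assms by (intro card_mono) auto

lemma hamming_dist_le_length: "hamming_dist x y \<le> length x"
  unfolding hamming_dist_def by (rule card_mono[of "{..<length x}", simplified]) auto

lemma hamming_dist_self [simp]: "hamming_dist x x = 0"
  unfolding hamming_dist_def by simp

lemma hamming_dist_sym: "length x = length y \<Longrightarrow> hamming_dist x y = hamming_dist y x"
  unfolding hamming_dist_def by (simp add: eq_commute)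

lemma hamming_dist_triangle:
  assumes "length x = length z"
  shows "hamming_dist x y \<le> hamming_dist x z + hamming_dist z y"
proof -
  have "{i. i < length x \<and> x ! i \<noteq> y ! i} \<subseteq>
        {i. i < length x \<and> x ! i \<noteq> z ! i} \<union> {i. i < length z \<and> z ! i \<noteq> y ! i}"
    using assms by auto
  then have "hamming_dist x y \<le> card ({i. i < length x \<and> x ! i \<noteq> z ! i} \<union> {i. i < length z \<and> z ! i \<noteq> y ! i})"
    unfolding hamming_dist_def by (intro card_mono) auto
  also have "\<dots> \<le> hamming_dist x z + hamming_dist z y"
    unfolding hamming_dist_def by (rule card_Un_le)
  finally show ?thesis .
qed

lemma hamming_dist_list_update: "hamming_dist c (c[i := v]) \<le> 1"
proof -
  have "{k. k < length c \<and> c ! k \<noteq> c[i := v] ! k} \<subseteq> {i}"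
    by (auto intro: ccontr)
  then show ?thesis
    unfolding hamming_dist_def using card_mono[of "{i}"] by fastforce
qed

lemma hamming_dist_le_take:
  assumes "length x = N + 1" "length y = N + 1"
  shows "hamming_dist x y \<le> hamming_dist (take N x) (take N y) + 1"
proof -
  have "{k. k < length x \<and> x ! k \<noteq> y ! k} \<subseteq>
        {k. k < length (take N x) \<and> take N x ! k \<noteq> take N y ! k} \<union> {N}"
    using assms by auto
  then have "hamming_dist x y \<le> card ({k. k < length (take N x) \<and> take N x ! k \<noteq> take N y ! k} \<union> {N})"
    unfolding hamming_dist_def by (intro card_mono) auto
  also have "\<dots> \<le> hamming_dist (take N x) (take N y) + 1"
    unfolding hamming_dist_def using card_Un_le[of _ "{N}"] by simp
  finally show ?thesis .
qed

lemma hamming_dist_eq_weight_diff: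
  fixes x y :: "'a::ab_group_add list"
  assumes "length x = length y"
  shows "hamming_dist x y = hamming_weight (map2 (-) x y)"
proof -
  have "{i. i < length x \<and> x ! i \<noteq> y ! i} = {i. i < length (map2 (-) x y) \<and> map2 (-) x y ! i \<noteq> 0}"
    using assms by auto
  then show ?thesis unfolding hamming_dist_def hamming_weight_def by simp
qed

lemma hamming_dist_replicate_0: "hamming_dist c (replicate (length c) 0) = hamming_weight c"
  unfolding hamming_dist_def hamming_weight_def by (rule arg_cong[where f = card]) auto

lemma hamming_dist_eq_0_iff: "length x = length y \<Longrightarrow> hamming_dist x y = 0 \<longleftrightarrow> x = y"
  unfolding hamming_dist_def by (auto simp: card_eq_0_iff list_eq_iff_nth_eq)

lemma min_dist_le_hamming_dist:
  assumes "C \<subseteq> {xs. length xs = n}" "x \<in> C" "y \<in> C" "x \<noteq> y"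
  shows "min_dist C \<le> hamming_dist x y"
proof -
  have "{hamming_dist x y | x y. x \<in> C \<and> y \<in> C \<and> x \<noteq> y} \<subseteq> {..n}"
    using assms(1) hamming_dist_le_length by fastforce
  then show ?thesis
    unfolding min_dist_def using assms(2-4) by (blast intro: Min_le finite_subset)
qed

lemma min_dist_eqI:
  assumes "C \<subseteq> {xs. length xs = n}"
    and "\<And>x y. x \<in> C \<Longrightarrow> y \<in> C \<Longrightarrow> x \<noteq> y \<Longrightarrow> d \<le> hamming_dist x y"
    and "x \<in> C" "y \<in> C" "x \<noteq> y" "hamming_dist x y \<le> d"
  shows "min_dist C = d"
proof -
  have "{hamming_dist x y | x y. x \<in> C \<and> y \<in> C \<and> x \<noteq> y} \<subseteq> {..n}"
    using assms(1) hamming_dist_le_length by fastforce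
  moreover have "hamming_dist x y = d"
    using assms(2-6) by (simp add: order.antisym)
  ultimately show ?thesis
    unfolding min_dist_def using assms(2-5) by (intro Min_eqI) (auto intro: finite_subset)
qed

lemma linear_code_diff:
  assumes "linear_code n C" "x \<in> C" "y \<in> C"
  shows "map2 (-) x y \<in> C"
proof -
  have "map2 (+) x (map ((*) (-1)) y) \<in> C"
    using assms unfolding linear_code_def by blast
  moreover have "map2 (+) x (map ((*) (-1)) y) = map2 (-) x y"
    by (induction x y rule: list_induct2') auto
  ultimately show ?thesis by simp
qed

lemma linear_code_min_dist_eqI:
  assumes C: "linear_code n C"
    and lower: "\<And>c. c \<in> C \<Longrightarrow> c \<noteq> replicate n 0 \<Longrightarrow> d \<le> hamming_weight c"
    and w: "w \<in> C" "w \<noteq> replicate n 0" "hamming_weight w \<le> d"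
  shows "min_dist C = d"
proof -
  have len: "C \<subseteq> {xs. length xs = n}"
    using C unfolding linear_code_def by blast
  have "d \<le> hamming_dist x y" if "x \<in> C" "y \<in> C" "x \<noteq> y" for x y
  proof -
    have "length x = n" "length y = n"
      using len that by auto
    then have "hamming_weight (map2 (-) x y) \<noteq> 0"
      using that(3) by (simp add: hamming_dist_eq_weight_diff flip: hamming_dist_eq_0_iff)
    then have "map2 (-) x y \<noteq> replicate n 0"
      using \<open>length x = n\<close> \<open>length y = n\<close> by (auto simp: hamming_weight_eq_0_iff)
    then show ?thesis
      using lower[OF linear_code_diff[OF C that(1,2)]] \<open>length x = n\<close> \<open>length y = n\<close>
      by (simp add: hamming_dist_eq_weight_diff)
  qed
  moreover have "replicate n 0 \<in> C"
    using C unfolding linear_code_def by blast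
  moreover have "hamming_dist w (replicate n 0) \<le> d"
    using w len hamming_dist_replicate_0[of w] by auto
  ultimately show ?thesis
    using w by (intro min_dist_eqI[OF len]) auto
qed

lemma has_params_le_hamming_dist:
  assumes "has_params C n k d" "x \<in> C" "y \<in> C" "x \<noteq> y"
  shows "d \<le> hamming_dist x y"
  using assms min_dist_le_hamming_dist[of C n x y]
  unfolding has_params_def linear_code_def by auto

definition hamming_ball1 :: "'a list \<Rightarrow> 'a list set" where
  "hamming_ball1 c = insert c ((\<lambda>(i, v). c[i := v]) ` (SIGMA i:{..<length c}. UNIV - {c ! i}))"

lemma length_hamming_ball1: "x \<in> hamming_ball1 c \<Longrightarrow> length x = length c"
  unfolding hamming_ball1_def by auto

lemma hamming_dist_hamming_ball1:
  assumes "x \<in> hamming_ball1 c"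
  shows "hamming_dist c x \<le> 1"
proof -
  from assms consider "x = c" | i v where "x = c[i := v]"
    unfolding hamming_ball1_def by auto
  then show ?thesis
    by cases (simp, metis hamming_dist_list_update)
qed

lemma finite_hamming_ball1: "finite (hamming_ball1 (c :: 'a::finite list))"
  unfolding hamming_ball1_def by simp

lemma card_hamming_ball1:
  fixes c :: "'a::finite list"
  shows "card (hamming_ball1 c) = 1 + length c * (card (UNIV :: 'a set) - 1)"
proof -
  let ?I = "SIGMA i:{..<length c}. UNIV - {c ! i}"
  have "inj_on (\<lambda>(i, v). c[i := v]) ?I"
  proof (rule inj_onI)
    fix p p' assume "p \<in> ?I" "p' \<in> ?I" "(\<lambda>(i, v). c[i := v]) p = (\<lambda>(i, v). c[i := v]) p'"
    then show "p = p'"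
      by (cases p, cases p') (auto, (metis nth_list_update_eq nth_list_update_neq)+)
  qed
  moreover have "c \<notin> (\<lambda>(i, v). c[i := v]) ` ?I"
    by (auto, metis nth_list_update_eq)
  moreover have "card ?I = length c * (card (UNIV :: 'a set) - 1)"
    by (simp add: card_Diff_singleton)
  ultimately show ?thesis
    unfolding hamming_ball1_def by (simp add: card_image)
qed

lemma hamming_ball1_disjoint:
  assumes "3 \<le> hamming_dist c c'"
  shows "hamming_ball1 c \<inter> hamming_ball1 c' = {}"
proof (rule ccontr)
  assume "hamming_ball1 c \<inter> hamming_ball1 c' \<noteq> {}"
  then obtain x where x: "x \<in> hamming_ball1 c" "x \<in> hamming_ball1 c'"
    by blast
  then have "hamming_dist c c' \<le> hamming_dist c x + hamming_dist c' x"
    using hamming_dist_triangle[of c x c'] hamming_dist_sym[of x c'] length_hamming_ball1 by metis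
  then show False
    using hamming_dist_hamming_ball1[OF x(1)] hamming_dist_hamming_ball1[OF x(2)] assms by simp
qed

lemma hamming_bound:
  fixes D :: "'a::finite list set"
  assumes D: "D \<subseteq> {xs. length xs = N}"
    and dist: "\<And>x y. x \<in> D \<Longrightarrow> y \<in> D \<Longrightarrow> x \<noteq> y \<Longrightarrow> 3 \<le> hamming_dist x y"
  shows "card D * (1 + N * (card (UNIV :: 'a set) - 1)) \<le> card (UNIV :: 'a set) ^ N"
proof -
  have "finite D"
    using D finite_lists_length_eq[of "UNIV :: 'a set" N] by (auto intro: finite_subset)
  then have "card (\<Union>c\<in>D. hamming_ball1 c) = (\<Sum>c\<in>D. card (hamming_ball1 c))"
  proof (rule card_UN_disjoint)
    show "\<forall>c\<in>D. \<forall>c'\<in>D. c \<noteq> c' \<longrightarrow> hamming_ball1 c \<inter> hamming_ball1 c' = {}"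
      using dist hamming_ball1_disjoint by blast
  qed (simp_all add: finite_hamming_ball1)
  also have "\<dots> = card D * (1 + N * (card (UNIV :: 'a set) - 1))"
    using D by (simp add: card_hamming_ball1 subset_iff)
  finally have "card (\<Union>c\<in>D. hamming_ball1 c) = card D * (1 + N * (card (UNIV :: 'a set) - 1))" .
  moreover have "(\<Union>c\<in>D. hamming_ball1 c) \<subseteq> {xs. length xs = N}"
    using D length_hamming_ball1 by blast
  then have "card (\<Union>c\<in>D. hamming_ball1 c) \<le> card (UNIV :: 'a set) ^ N"
    using card_mono[OF finite_lists_length_eq[of "UNIV :: 'a set" N]] card_lists_length_eq[of "UNIV :: 'a set" N]
    by simp
  ultimately show ?thesis by simp
qed

lemma hamming_bound_punctured:
  fixes D :: "'a::finite list set"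
  assumes D: "D \<subseteq> {xs. length xs = N + 1}"
    and dist: "\<And>x y. x \<in> D \<Longrightarrow> y \<in> D \<Longrightarrow> x \<noteq> y \<Longrightarrow> 4 \<le> hamming_dist x y"
  shows "card D * (1 + N * (card (UNIV :: 'a set) - 1)) \<le> card (UNIV :: 'a set) ^ N"
proof -
  have take_dist: "3 \<le> hamming_dist (take N x) (take N y)" if "x \<in> D" "y \<in> D" "x \<noteq> y" for x y
  proof -
    have "length x = N + 1" "length y = N + 1"
      using D that by auto
    then show ?thesis
      using dist[OF that] hamming_dist_le_take[of x N y] by linarith
  qed
  then have "inj_on (take N) D"
    by (metis hamming_dist_self inj_onI not_numeral_le_zero)
  moreover have "card (take N ` D) * (1 + N * (card (UNIV :: 'a set) - 1)) \<le> card (UNIV :: 'a set) ^ N"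
    using D take_dist by (intro hamming_bound) auto
  ultimately show ?thesis by (simp add: card_image)
qed

section \<open>Codes defined by a root in an extension field\<close>

definition eval_word :: "('a \<Rightarrow> 'b::comm_ring_1) \<Rightarrow> 'b \<Rightarrow> 'a list \<Rightarrow> 'b" where
  "eval_word emb a c = (\<Sum>i<length c. emb (c ! i) * a ^ i)"

definition root_code :: "('a::field \<Rightarrow> 'b::field) \<Rightarrow> 'b \<Rightarrow> nat \<Rightarrow> 'a list set" where
  "root_code emb a n = {c. length c = n \<and> eval_word emb a c = 0}"

lemma eval_word_map: "eval_word emb a (map f [0..<n]) = (\<Sum>i<n. emb (f i) * a ^ i)"
  unfolding eval_word_def by simp

context
  fixes emb :: "'a::field \<Rightarrow> 'b::field"
  assumes emb: "field_embedding emb"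
begin

lemma eval_word_add:
  "length x = length y \<Longrightarrow> eval_word emb a (map2 (+) x y) = eval_word emb a x + eval_word emb a y"
  unfolding eval_word_def by (simp add: emb sum.distrib distrib_right)

lemma eval_word_diff:
  "length x = length y \<Longrightarrow> eval_word emb a (map2 (-) x y) = eval_word emb a x - eval_word emb a y"
  unfolding eval_word_def by (simp add: emb sum_subtractf left_diff_distrib)

lemma eval_word_scale: "eval_word emb a (map ((*) c) x) = emb c * eval_word emb a x"
  unfolding eval_word_def by (simp add: emb sum_distrib_left mult.assoc)

lemma eval_word_eq_sum_support:
  "eval_word emb a c = (\<Sum>i\<in>{i. i < length c \<and> c ! i \<noteq> 0}. emb (c ! i) * a ^ i)"
  unfolding eval_word_def by (rule sum.mono_neutral_right) (auto simp: emb)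

lemma eval_word_map_delta:
  assumes "j < n"
  shows "eval_word emb a (map (\<lambda>i. if i = j then s else 0) [0..<n]) = emb s * a ^ j"
proof -
  have "eval_word emb a (map (\<lambda>i. if i = j then s else 0) [0..<n])
      = (\<Sum>i<n. if i = j then emb s * a ^ j else 0)"
    unfolding eval_word_map by (rule sum.cong) (simp_all add: emb)
  then show ?thesis
    using assms by simp
qed

lemma poly_map_poly_eq_eval_word:
  assumes "degree p < n"
  shows "poly (map_poly emb p) a = eval_word emb a (map (coeff p) [0..<n])"
proof -
  have "poly (map_poly emb p) a = (\<Sum>i\<le>degree (map_poly emb p). coeff (map_poly emb p) i * a ^ i)"
    by (rule poly_altdef)
  also have "\<dots> = (\<Sum>i<n. coeff (map_poly emb p) i * a ^ i)"
    using assms by (intro sum.mono_neutral_left) (auto simp: emb degree_map_poly coeff_eq_0)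
  finally show ?thesis
    by (simp add: eval_word_map coeff_map_poly emb)
qed

lemma degree_negacyclic_modulus: "0 < n \<Longrightarrow> degree (monom 1 n + 1 :: 'c::field poly) = n"
  by (simp add: degree_add_eq_left degree_monom_eq)

lemma poly_negacyclic_modulus_root:
  assumes "a ^ n = -1"
  shows "poly (map_poly emb (monom 1 n + 1)) a = 0"
proof -
  have "map_poly emb (monom 1 n + 1) = monom 1 n + 1"
    by (intro poly_eqI) (simp add: coeff_map_poly emb coeff_monom)
  then show ?thesis
    using assms by (simp add: poly_monom)
qed

lemma negacyclic_code_eq_root_code:
  assumes "0 < n" "a ^ n = -1"
  shows "negacyclic_code n (min_poly emb a) = root_code emb a n"
proof -
  define X :: "'a poly" where "X = monom 1 n + 1"
  have deg_X: "degree X = n"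
    unfolding X_def using degree_negacyclic_modulus[OF assms(1)] .
  have root: "poly (map_poly emb X) a = 0"
    unfolding X_def using assms(2) by (rule poly_negacyclic_modulus_root)
  then have dvd_iff: "min_poly emb a dvd p \<longleftrightarrow> poly (map_poly emb p) a = 0" for p
    using min_poly_dvd_iff[OF emb, of X a] deg_X assms(1) by fastforce
  have "(\<exists>h. c = map (coeff ((min_poly emb a * h) mod X)) [0..<n]) \<longleftrightarrow> c \<in> root_code emb a n"
    for c
  proof
    assume "\<exists>h. c = map (coeff ((min_poly emb a * h) mod X)) [0..<n]"
    then obtain h where c: "c = map (coeff ((min_poly emb a * h) mod X)) [0..<n]" ..
    have "min_poly emb a dvd (min_poly emb a * h) mod X"
      using dvd_iff[of X] root by (simp add: dvd_mod)
    moreover have "degree ((min_poly emb a * h) mod X) < n"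
    proof (cases "(min_poly emb a * h) mod X = 0")
      case False
      moreover have "X \<noteq> 0" using deg_X assms(1) by auto
      ultimately show ?thesis using deg_X degree_mod_less' by blast
    qed (use assms(1) in simp)
    ultimately show "c \<in> root_code emb a n"
      unfolding root_code_def c using dvd_iff poly_map_poly_eq_eval_word by simp
  next
    assume c: "c \<in> root_code emb a n"
    then have len: "length c = n" unfolding root_code_def by simp
    have deg: "degree (Poly c) < n" and coeffs: "map (coeff (Poly c)) [0..<n] = c"
      using len assms(1) by (auto intro!: nth_equalityI degree_lessI simp: nth_default_def)
    then have "min_poly emb a dvd Poly c"
      using c dvd_iff poly_map_poly_eq_eval_word[OF deg] unfolding root_code_def by simp
    then obtain h where "Poly c = min_poly emb a * h" ..
    then show "\<exists>h. c = map (coeff ((min_poly emb a * h) mod X)) [0..<n]"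
      using deg deg_X coeffs by (metis mod_poly_less)
  qed
  then show ?thesis
    unfolding negacyclic_code_def X_def[symmetric] by blast
qed

lemma linear_code_root_code: "linear_code n (root_code emb a n)"
proof -
  have "eval_word emb a (replicate n 0) = 0"
    unfolding eval_word_def by (simp add: emb)
  then show ?thesis
    unfolding linear_code_def root_code_def by (auto simp: eval_word_add eval_word_scale)
qed

lemma root_code_weight_ne_1:
  assumes "a \<noteq> 0" "c \<in> root_code emb a n"
  shows "hamming_weight c \<noteq> 1"
proof
  assume "hamming_weight c = 1"
  then obtain i where "{i. i < length c \<and> c ! i \<noteq> 0} = {i}"
    unfolding hamming_weight_def by (rule card_1_singletonE)
  then show False
    using assms eval_word_eq_sum_support[of a c] unfolding root_code_def by (auto simp: emb)
qed

lemma root_code_weight_ne_2: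
  assumes "a \<noteq> 0" "c \<in> root_code emb a n"
    and no_scalar_power: "\<And>u k. 0 < k \<Longrightarrow> k < n \<Longrightarrow> a ^ k \<noteq> emb u"
  shows "hamming_weight c \<noteq> 2"
proof
  assume "hamming_weight c = 2"
  then obtain i j where ij: "{i. i < length c \<and> c ! i \<noteq> 0} = {i, j}" "i < j"
    unfolding hamming_weight_def card_2_iff by (metis doubleton_eq_iff nat_neq_iff)
  then have "emb (c ! i) * a ^ i + emb (c ! j) * a ^ j = 0"
    using assms(2) eval_word_eq_sum_support[of a c] unfolding root_code_def by simp
  moreover have "a ^ j = a ^ i * a ^ (j - i)"
    using ij(2) by (simp flip: power_add)
  ultimately have "a ^ i * (emb (c ! i) + emb (c ! j) * a ^ (j - i)) = 0"
    by (simp add: algebra_simps)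
  then have "emb (c ! j) * a ^ (j - i) = - emb (c ! i)"
    using assms(1) by (simp add: add_eq_0_iff add.commute)
  moreover have "c ! i \<noteq> 0" "c ! j \<noteq> 0" "j < n"
    using ij assms(2) unfolding root_code_def by blast+
  ultimately have "a ^ (j - i) = emb (- (c ! i) / c ! j)"
    by (simp add: emb field_simps)
  then show False
    using no_scalar_power[of "j - i"] ij(2) \<open>j < n\<close> by simp
qed

lemma min_dist_root_code_eq_2:
  assumes "a \<noteq> 0" "0 < k" "k < n" "a ^ k = emb u"
  shows "min_dist (root_code emb a n) = 2"
proof (rule linear_code_min_dist_eqI[OF linear_code_root_code])
  show "2 \<le> hamming_weight c" if "c \<in> root_code emb a n" "c \<noteq> replicate n 0" for c
    using root_code_weight_ne_1[OF assms(1) that(1)] that hamming_weight_eq_0_iff[of c]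
    unfolding root_code_def by fastforce
  define w where "w = map (\<lambda>i. if i = 0 then u else if i = k then -1 else 0) [0..<n]"
  have "eval_word emb a w = emb u - a ^ k"
    unfolding w_def eval_word_map using assms(2,3)
    by (simp add: emb if_distrib[of emb] if_distrib[of "\<lambda>x. x * _"] sum.If_cases lessThan_def)
  then show "w \<in> root_code emb a n"
    unfolding root_code_def w_def using assms(4) by simp
  have "w ! k = -1"
    unfolding w_def using assms(2,3) by simp
  then show "w \<noteq> replicate n 0"
    using assms(3) by auto
  have "hamming_weight w \<le> card {0, k}"
    unfolding w_def by (rule hamming_weight_map_le) (auto split: if_splits)
  then show "hamming_weight w \<le> 2"
    using assms(2) by simp
qed

end

lemma card_root_code:
  fixes emb :: "'a::{finite,field} \<Rightarrow> 'b::{finite,field}"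
  assumes emb: "field_embedding emb"
    and surj: "\<And>b. \<exists>c. length c = n \<and> eval_word emb a c = b"
  shows "card (UNIV :: 'b set) * card (root_code emb a n) = card (UNIV :: 'a set) ^ n"
proof -
  define F where "F b = {c. length c = n \<and> eval_word emb a c = b}" for b
  have fin: "finite (F b)" for b
    using finite_lists_length_eq[of "UNIV :: 'a set" n] unfolding F_def by (auto intro: finite_subset)
  have "card (F b) = card (root_code emb a n)" for b
  proof -
    obtain s where s: "length s = n" "eval_word emb a s = b"
      using surj by blast
    have "bij_betw (\<lambda>c. map2 (+) c s) (root_code emb a n) (F b)"
    proof (rule bij_betw_byWitness[where f' = "\<lambda>c. map2 (-) c s"])
      show "\<forall>c\<in>root_code emb a n. map2 (-) (map2 (+) c s) s = c"
        "\<forall>c\<in>F b. map2 (+) (map2 (-) c s) s = c"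
        using s unfolding root_code_def F_def by (auto intro: nth_equalityI)
      show "(\<lambda>c. map2 (+) c s) ` root_code emb a n \<subseteq> F b"
        "(\<lambda>c. map2 (-) c s) ` F b \<subseteq> root_code emb a n"
        using s unfolding root_code_def F_def by (auto simp: eval_word_add eval_word_diff emb)
    qed
    then show ?thesis by (simp add: bij_betw_same_card)
  qed
  moreover have "{c :: 'a list. length c = n} = (\<Union>b. F b)"
    unfolding F_def by auto
  moreover have "card (\<Union>b. F b) = (\<Sum>b\<in>UNIV. card (F b))"
  proof (rule card_UN_disjoint)
    show "\<forall>b\<in>UNIV. \<forall>b'\<in>UNIV. b \<noteq> b' \<longrightarrow> F b \<inter> F b' = {}"
      unfolding F_def by blast
  qed (use fin in auto)
  ultimately show ?thesis
    using card_lists_length_eq[of "UNIV :: 'a set" n] by (simp add: mult.commute)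
qed

section \<open>Primitive elements of a field with 2n + 1 elements\<close>

lemma two_le_card_finite_field: "2 \<le> card (UNIV :: 'a::{finite,field} set)"
proof -
  have "card {0 :: 'a, 1} \<le> card (UNIV :: 'a set)"
    by (rule card_mono) auto
  then show ?thesis
    by simp
qed

lemma primitive_element_nonzero: "primitive_element \<alpha> \<Longrightarrow> \<alpha> \<noteq> 0"
  unfolding primitive_element_def by (metis Diff_iff insertI1 power_one_right rangeI)

lemma finite_field_power_card_minus_1:
  fixes x :: "'a::{finite,field}"
  assumes "x \<noteq> 0"
  shows "x ^ (card (UNIV :: 'a set) - 1) = 1"
proof -
  have "x ^ card (UNIV - {0 :: 'a}) * (\<Prod>y\<in>UNIV - {0}. y) = (\<Prod>y\<in>UNIV - {0 :: 'a}. x * y)"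
    by (simp add: prod.distrib)
  also have "\<dots> = (\<Prod>y\<in>UNIV - {0}. y)"
    by (rule prod.reindex_bij_witness[of _ "\<lambda>y. y / x" "\<lambda>y. x * y"]) (use assms in auto)
  finally show ?thesis
    by (simp add: card_Diff_singleton)
qed

lemma primitive_element_bij_betw:
  fixes \<alpha> :: "'a::{finite,field}"
  assumes "primitive_element \<alpha>"
  shows "bij_betw (\<lambda>i. \<alpha> ^ i) {..<card (UNIV :: 'a set) - 1} (UNIV - {0})"
proof -
  let ?N = "card (UNIV :: 'a set) - 1"
  have range: "range (\<lambda>i. \<alpha> ^ i) = UNIV - {0}"
    using assms unfolding primitive_element_def .
  have "0 < ?N"
    using two_le_card_finite_field[where 'a = 'a] by simp
  have mod_N: "\<alpha> ^ i = \<alpha> ^ (i mod ?N)" for i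
  proof -
    have "\<alpha> ^ i = (\<alpha> ^ ?N) ^ (i div ?N) * \<alpha> ^ (i mod ?N)"
      by (simp flip: power_mult power_add)
    then show ?thesis
      using finite_field_power_card_minus_1[OF primitive_element_nonzero[OF assms]] by simp
  qed
  have image: "(\<lambda>i. \<alpha> ^ i) ` {..<?N} = UNIV - {0}"
    unfolding range[symmetric]
  proof (intro equalityI subsetI)
    fix b assume "b \<in> range (\<lambda>i. \<alpha> ^ i)"
    then obtain i where "b = \<alpha> ^ (i mod ?N)"
      using mod_N by auto
    then show "b \<in> (\<lambda>i. \<alpha> ^ i) ` {..<?N}"
      using \<open>0 < ?N\<close> by auto
  qed auto
  moreover have "card ((\<lambda>i. \<alpha> ^ i) ` {..<?N}) = card {..<?N}"
    unfolding image by (simp add: card_Diff_singleton)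
  ultimately show ?thesis
    unfolding bij_betw_def by (simp add: eq_card_imp_inj_on)
qed

context
  fixes emb :: "'a::{finite,field} \<Rightarrow> 'b::{finite,field}" and \<alpha> :: 'b and n :: nat
  assumes emb: "field_embedding emb"
    and prim: "primitive_element \<alpha>"
    and card_b: "card (UNIV :: 'b set) = 2 * n + 1"
begin

lemma primitive_power_bij_betw: "bij_betw (\<lambda>i. \<alpha> ^ i) {..<2 * n} (UNIV - {0})"
  using primitive_element_bij_betw[OF prim] card_b by simp

lemma primitive_power_eq_iff: "i < 2 * n \<Longrightarrow> j < 2 * n \<Longrightarrow> \<alpha> ^ i = \<alpha> ^ j \<longleftrightarrow> i = j"
  using primitive_power_bij_betw unfolding bij_betw_def inj_on_def by blast

lemmas primitive_nonzero = primitive_element_nonzero[OF prim]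

lemma half_order_pos: "0 < n"
  using two_le_card_finite_field[where 'a = 'b] card_b by simp

lemma primitive_power_half_order: "\<alpha> ^ n = -1"
proof -
  have "(\<alpha> ^ n)\<^sup>2 = 1"
    using finite_field_power_card_minus_1[OF primitive_nonzero] card_b
    by (simp flip: power_mult add: mult.commute)
  moreover have "\<alpha> ^ n \<noteq> \<alpha> ^ 0"
    using primitive_power_eq_iff[of n 0] half_order_pos by simp
  ultimately show ?thesis
    by (simp add: power2_eq_1_iff)
qed

lemma nonzero_eq_plus_minus_power:
  assumes "b \<noteq> 0"
  obtains j where "j < n" "b = \<alpha> ^ j \<or> b = - (\<alpha> ^ j)"
proof -
  have "b \<in> (\<lambda>i. \<alpha> ^ i) ` {..<2 * n}"
    using assms primitive_power_bij_betw unfolding bij_betw_def by simp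
  then obtain i where i: "i < 2 * n" "b = \<alpha> ^ i"
    by auto
  show ?thesis
  proof (cases "i < n")
    case False
    then have "b = \<alpha> ^ n * \<alpha> ^ (i - n)"
      using i(2) by (simp flip: power_add)
    then show ?thesis
      using that[of "i - n"] i(1) False primitive_power_half_order by simp
  qed (use that i in auto)
qed

lemma eval_word_primitive_surj: "\<exists>c. length c = n \<and> eval_word emb \<alpha> c = b"
proof (cases "b = 0")
  case True
  then show ?thesis
    by (intro exI[of _ "replicate n 0"]) (simp add: eval_word_def emb)
next
  case False
  then obtain j where j: "j < n" "b = emb 1 * \<alpha> ^ j \<or> b = emb (-1) * \<alpha> ^ j"
    by (rule nonzero_eq_plus_minus_power) (simp add: emb)
  then show ?thesis
    using eval_word_map_delta[OF emb j(1), of \<alpha>] by (metis length_map length_upt minus_nat.diff_0)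
qed

lemma card_root_code_primitive:
  assumes "card (UNIV :: 'a set) ^ m = 2 * n + 1" "m \<le> n"
  shows "card (root_code emb \<alpha> n) = card (UNIV :: 'a set) ^ (n - m)"
proof -
  have "(2 * n + 1) * card (root_code emb \<alpha> n) = card (UNIV :: 'a set) ^ (m + (n - m))"
    using card_root_code[OF emb eval_word_primitive_surj] card_b assms by simp
  also have "\<dots> = (2 * n + 1) * card (UNIV :: 'a set) ^ (n - m)"
    by (simp only: power_add assms(1))
  finally show ?thesis
    by (rule mult_left_cancel[THEN iffD1, rotated]) simp
qed

lemma negacyclic_code_eq_root_code_primitive:
  "negacyclic_code n (min_poly emb \<alpha>) = root_code emb \<alpha> n"
  by (rule negacyclic_code_eq_root_code[OF emb half_order_pos primitive_power_half_order])

lemma primitive_power_in_subfield_iff: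
  "(\<exists>u k. 0 < k \<and> k < n \<and> \<alpha> ^ k = emb u) \<longleftrightarrow> (UNIV :: 'a set) \<noteq> {0, 1, -1}"
proof
  assume "\<exists>u k. 0 < k \<and> k < n \<and> \<alpha> ^ k = emb u"
  then obtain u k where "0 < k" "k < n" "\<alpha> ^ k = emb u" by blast
  moreover have "\<alpha> ^ k \<noteq> emb 0" using primitive_nonzero by (simp add: emb)
  moreover have "\<alpha> ^ k \<noteq> emb 1" if "0 < k" "k < n" for k
    using primitive_power_eq_iff[of k 0] that by (simp add: emb)
  moreover have "\<alpha> ^ k \<noteq> emb (-1)" if "0 < k" "k < n" for k
    using primitive_power_eq_iff[of k n] primitive_power_half_order that by (simp add: emb)
  ultimately have "u \<notin> {0, 1, -1}"
    by auto
  then show "(UNIV :: 'a set) \<noteq> {0, 1, -1}"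
    by auto
next
  assume "(UNIV :: 'a set) \<noteq> {0, 1, -1}"
  then obtain u :: 'a where u: "u \<notin> {0, 1, -1}" by blast
  then have "emb u \<noteq> 0"
    by (simp add: emb)
  then obtain j where j: "j < n" "emb u = \<alpha> ^ j \<or> emb u = - (\<alpha> ^ j)"
    by (rule nonzero_eq_plus_minus_power)
  then obtain v where "v \<notin> {0, 1}" "\<alpha> ^ j = emb v"
  proof (elim disjE)
    assume "emb u = - (\<alpha> ^ j)"
    then have "\<alpha> ^ j = emb (- u)"
      by (simp add: emb)
    moreover have "- u \<notin> {0, 1}"
      using u by (auto simp: minus_equation_iff)
    ultimately show thesis
      using that by blast
  qed (use u that in auto)
  moreover have "j \<noteq> 0"
    using calculation by (cases j) (auto simp: emb)
  ultimately show "\<exists>u k. 0 < k \<and> k < n \<and> \<alpha> ^ k = emb u"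
    using j(1) by blast
qed

lemma one_plus_primitive_relation:
  assumes "2 \<le> n"
  obtains j s where "j < n" "1 + \<alpha> + emb s * \<alpha> ^ j = 0"
proof -
  have "1 + \<alpha> \<noteq> 0"
  proof
    assume "1 + \<alpha> = 0"
    then have "\<alpha> ^ 1 = \<alpha> ^ n"
      using primitive_power_half_order by (simp add: add_eq_0_iff)
    then show False
      using primitive_power_eq_iff[of 1 n] assms by simp
  qed
  then obtain j where j: "j < n" "1 + \<alpha> = \<alpha> ^ j \<or> 1 + \<alpha> = - (\<alpha> ^ j)"
    by (rule nonzero_eq_plus_minus_power)
  from j(2) show ?thesis
  proof (elim disjE)
    assume "1 + \<alpha> = \<alpha> ^ j"
    then show thesis
      using that[of j "-1"] j(1) by (simp add: emb)
  next
    assume "1 + \<alpha> = - (\<alpha> ^ j)"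
    then show thesis
      using that[of j 1] j(1) by (simp add: emb)
  qed
qed

lemma root_code_primitive_weight_3_word:
  assumes "2 \<le> n"
  obtains w where "w \<in> root_code emb \<alpha> n" "w \<noteq> replicate n 0" "hamming_weight w \<le> 3"
proof -
  obtain j s where j: "j < n" and s: "1 + \<alpha> + emb s * \<alpha> ^ j = 0"
    using one_plus_primitive_relation[OF assms] .
  define f where "f i = (if i = 0 then 1 else 0) + (if i = 1 then 1 else 0) + (if i = j then s else 0)" for i
  have "eval_word emb \<alpha> (map f [0..<n])
      = (\<Sum>i<n. (if i = 0 then 1 else 0) + (if i = 1 then \<alpha> else 0) + (if i = j then emb s * \<alpha> ^ j else 0))"
    unfolding eval_word_map f_def by (rule sum.cong) (auto simp: emb distrib_right)
  also have "\<dots> = 1 + \<alpha> + emb s * \<alpha> ^ j"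
    using assms j by (simp add: sum.distrib)
  finally have "map f [0..<n] \<in> root_code emb \<alpha> n"
    unfolding root_code_def using s by simp
  moreover have "map f [0..<n] \<noteq> replicate n 0"
  proof
    assume zero: "map f [0..<n] = replicate n 0"
    have "f k = 0" if "k < n" for k
      using arg_cong[OF zero, of "\<lambda>w. w ! k"] that by simp
    moreover have "f (if j = 0 then 1 else 0) = 1"
      unfolding f_def by simp
    moreover have "(if j = 0 then 1 else 0) < n"
      using assms by simp
    ultimately show False
      by (metis one_neq_zero)
  qed
  moreover have "hamming_weight (map f [0..<n]) \<le> card {0, 1, j}"
    by (rule hamming_weight_map_le) (auto simp: f_def split: if_splits)
  moreover have "card {0 :: nat, 1, j} \<le> 3"
    by (auto simp: card_insert_if)
  ultimately show ?thesis
    using that by simp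
qed

lemma min_dist_root_code_primitive:
  assumes "2 \<le> n"
  shows "min_dist (root_code emb \<alpha> n) = (if (UNIV :: 'a set) = {0, 1, -1} then 3 else 2)"
proof (cases "(UNIV :: 'a set) = {0, 1, -1}")
  case True
  have "3 \<le> hamming_weight c" if "c \<in> root_code emb \<alpha> n" "c \<noteq> replicate n 0" for c
  proof -
    have "hamming_weight c \<noteq> 0"
      using that hamming_weight_eq_0_iff[of c] unfolding root_code_def by auto
    moreover have "hamming_weight c \<noteq> 1"
      by (rule root_code_weight_ne_1[OF emb primitive_nonzero that(1)])
    moreover have "hamming_weight c \<noteq> 2"
      using True primitive_power_in_subfield_iff
      by (intro root_code_weight_ne_2[OF emb primitive_nonzero that(1)]) blast
    ultimately show ?thesis by linarith
  qed
  moreover obtain w where "w \<in> root_code emb \<alpha> n" "w \<noteq> replicate n 0" "hamming_weight w \<le> 3"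
    using root_code_primitive_weight_3_word[OF assms] .
  ultimately show ?thesis
    using True by (simp add: linear_code_min_dist_eqI[OF linear_code_root_code[OF emb]])
next
  case False
  then obtain u k where "0 < k" "k < n" "\<alpha> ^ k = emb u"
    using primitive_power_in_subfield_iff by blast
  then show ?thesis
    using False min_dist_root_code_eq_2[OF emb primitive_nonzero] by simp
qed

lemma has_params_root_code_primitive:
  assumes "card (UNIV :: 'a set) ^ m = 2 * n + 1" "m \<le> n" "2 \<le> n"
  shows "has_params (root_code emb \<alpha> n) n (n - m) (if (UNIV :: 'a set) = {0, 1, -1} then 3 else 2)"
  unfolding has_params_def
  using linear_code_root_code[OF emb] card_root_code_primitive[OF assms(1,2)]
    min_dist_root_code_primitive[OF assms(3)] by blast

end

section \<open>Distance optimality and the main theorem\<close>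

lemma two_ne_zero_if_odd_card:
  assumes "odd (card (UNIV :: 'a::{finite,ring_1} set))"
  shows "(2::'a) \<noteq> 0"
proof
  assume "(2::'a) = 0"
  then have "CHAR('a) dvd 2"
    using of_nat_eq_0_iff_char_dvd[where 'a='a, of 2] by simp
  moreover have "CHAR('a) dvd card (UNIV :: 'a set)"
    by (rule CHAR_dvd_CARD)
  ultimately show False
    using assms by (metis CHAR_not_1 dvd_1_iff_1 dvd_mod even_iff_mod_2_eq_zero not_mod2_eq_Suc_0_eq_0)
qed

lemma UNIV_eq_zero_one_minus_one_iff:
  assumes "odd (card (UNIV :: 'a::{finite,field} set))"
  shows "(UNIV :: 'a set) = {0, 1, -1} \<longleftrightarrow> card (UNIV :: 'a set) = 3"
proof -
  have "(1::'a) \<noteq> -1"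
    using two_ne_zero_if_odd_card[OF assms] by (metis one_add_one add_eq_0_iff)
  then have "card {0 :: 'a, 1, -1} = 3"
    by simp
  then show ?thesis
    by (metis card_subset_eq finite subset_UNIV)
qed

lemma ord_power_minus_one:
  fixes q m :: nat
  assumes "1 < q" "0 < m"
  shows "ord (q ^ m - 1) q = m"
proof -
  define M where "M = q ^ m - 1"
  have qm: "q ^ m = M + 1"
    unfolding M_def using assms by simp
  have "coprime M q"
    unfolding M_def using assms coprime_diff_one_left_nat[of "q ^ m"] by (simp add: coprime_power_right_iff)
  have "[q ^ m = 1] (mod M)"
    unfolding cong_def qm by (simp only: mod_add_self1)
  then have "ord M q dvd m"
    by (simp only: ord_divides)
  then have "ord M q \<le> m"
    using assms(2) by (rule dvd_imp_le)
  moreover have "\<not> ord M q < m"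
  proof
    assume less: "ord M q < m"
    have ord_pos: "0 < ord M q"
      using \<open>coprime M q\<close> by (simp add: ord_eq_0 gr0I)
    have "q \<le> q ^ ord M q"
      by (rule self_le_power) (use assms(1) ord_pos in auto)
    moreover have "q ^ ord M q \<le> q ^ (m - 1)"
      by (rule power_increasing) (use assms(1) less in auto)
    moreover have "q \<le> q ^ (m - 1)"
      by (rule self_le_power) (use assms(1) ord_pos less in linarith)+
    moreover have "q * q ^ (m - 1) = q ^ m"
      using assms(2) by (simp flip: power_Suc)
    then have "2 * q ^ (m - 1) \<le> q ^ m"
      using assms(1) by (metis Suc_leI mult_le_mono1 one_add_one plus_1_eq_Suc)
    ultimately have "1 < q ^ ord M q" "q ^ ord M q < M"
      using assms(1) qm by linarith+
    then show False
      using ord[of q M] by (auto simp: cong_def)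
  qed
  ultimately show ?thesis
    unfolding M_def by simp
qed

lemma distance_optimal_2:
  assumes q: "card (UNIV :: 'a::{finite,field} set) = q"
    and "3 < q" "0 < m" "m \<le> n" "q ^ m = 2 * n + 1"
  shows "distance_optimal TYPE('a) n (n - m) 2"
  unfolding distance_optimal_def
proof
  assume "\<exists>C :: 'a list set. has_params C n (n - m) (2 + 1)"
  then obtain C :: "'a list set" where C: "has_params C n (n - m) 3"
    by auto
  have "card C * (1 + n * (q - 1)) \<le> q ^ n"
    using C q hamming_bound[of C n] has_params_le_hamming_dist[OF C]
    unfolding has_params_def linear_code_def by blast
  moreover have "card C = q ^ (n - m)"
    using C q unfolding has_params_def by simp
  moreover have "q ^ n = q ^ (n - m) * q ^ m"
    using assms(4) by (simp flip: power_add)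
  ultimately have "n * (q - 1) \<le> n * 2"
    using assms(2,5) by simp
  moreover have "q \<le> q ^ m"
    using assms(2,3) by (simp add: self_le_power)
  then have "0 < n"
    using assms(2,5) by linarith
  ultimately show False
    using assms(2) by simp
qed

lemma distance_optimal_ternary_3:
  assumes "card (UNIV :: 'a::{finite,field} set) = 3"
    and "2 \<le> m" "m \<le> n" "3 ^ m = 2 * n + 1"
  shows "distance_optimal TYPE('a) n (n - m) 3"
  unfolding distance_optimal_def
proof
  assume "\<exists>C :: 'a list set. has_params C n (n - m) (3 + 1)"
  then obtain C :: "'a list set" where C: "has_params C n (n - m) 4"
    by auto
  have "card C * (1 + (n - 1) * 2) \<le> 3 ^ (n - 1)"
    using C assms(1-3) hamming_bound_punctured[of C "n - 1"] has_params_le_hamming_dist[OF C]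
    unfolding has_params_def linear_code_def by auto
  moreover have "card C = 3 ^ (n - m)"
    using C assms(1) unfolding has_params_def by simp
  moreover have "(3::nat) ^ (n - 1) = 3 ^ (n - m) * 3 ^ (m - 1)"
    using assms(2,3) by (simp flip: power_add)
  ultimately have "3 ^ (n - m) * (1 + (n - 1) * 2) \<le> 3 ^ (n - m) * (3::nat) ^ (m - 1)"
    by (simp only:)
  then have "1 + (n - 1) * 2 \<le> 3 ^ (m - 1)"
    by (metis mult_le_cancel1 zero_less_numeral zero_less_power)
  moreover have "(3::nat) ^ m = 3 * 3 ^ (m - 1)"
    using assms(2) by (simp flip: power_Suc)
  ultimately show False
    using assms(2-4) by linarith
qed

lemma le_half_power_minus_one:
  fixes q m :: nat
  assumes "3 \<le> q"
  shows "m \<le> (q ^ m - 1) div 2"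
proof -
  have "2 * m + 1 \<le> (3::nat) ^ m"
    by (induction m) auto
  also have "\<dots> \<le> q ^ m"
    using assms by (rule power_mono) simp
  finally show ?thesis
    by linarith
qed

lemma distance_optimal_negacyclic_parameters:
  assumes "card (UNIV :: 'a::{finite,field} set) = q" "3 \<le> q" "odd q"
    and "2 \<le> m" "m \<le> n" "q ^ m = 2 * n + 1"
  shows "distance_optimal TYPE('a) n (n - m) (if q = 3 then 3 else 2)"
proof (cases "q = 3")
  case True
  then show ?thesis
    using distance_optimal_ternary_3[of m n] assms by simp
next
  case False
  then have "3 < q" "0 < m"
    using assms(2,4) by simp_all
  then show ?thesis
    using distance_optimal_2[OF assms(1)] False assms(5,6) by simp
qed

theorem theorem37:
  fixes emb :: "'a::{finite,field} \<Rightarrow> 'b::{finite,field}"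
    and q m n l :: nat and \<alpha> :: 'b
  assumes "card (UNIV :: 'a set) = q"
    and "odd q" and "\<exists>p r. prime p \<and> r > 0 \<and> q = p ^ r"
    and "m \<ge> 2" and "n = (q ^ m - 1) div 2"
    and "l = ord (2 * n) q" and "card (UNIV :: 'b set) = q ^ l"
    and "field_embedding emb"
    and "primitive_element \<alpha>"
  shows "has_params (negacyclic_code n (min_poly emb (\<alpha> ^ ((q ^ l - 1) div (2 * n)))))
            n (n - m) (if q = 3 then 3 else 2)
       \<and> distance_optimal TYPE('a) n (n - m) (if q = 3 then 3 else 2)"
proof -
  have "3 \<le> q"
    using two_le_card_finite_field[where 'a = 'a] assms(1,2) by (auto elim: oddE)
  have "odd (q ^ m)"
    using assms(2) by simp
  then have qm: "q ^ m = 2 * n + 1"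
    using assms(5) by (auto elim: oddE)
  have "m \<le> n"
    using le_half_power_minus_one[OF \<open>3 \<le> q\<close>] assms(5) by simp
  then have "l = m" and card_b: "card (UNIV :: 'b set) = 2 * n + 1"
    using assms(4,6,7) qm ord_power_minus_one[of q m] \<open>3 \<le> q\<close> by auto
  then have "\<alpha> ^ ((q ^ l - 1) div (2 * n)) = \<alpha>"
    using qm assms(4) \<open>m \<le> n\<close> by simp
  moreover have "(UNIV :: 'a set) = {0, 1, -1} \<longleftrightarrow> q = 3"
    using UNIV_eq_zero_one_minus_one_iff[where 'a = 'a] assms(1,2) by simp
  ultimately show ?thesis
    using negacyclic_code_eq_root_code_primitive[OF assms(8,9) card_b]
      has_params_root_code_primitive[OF assms(8,9) card_b, of m] assms(1,4) qm \<open>m \<le> n\<close>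
      distance_optimal_negacyclic_parameters[OF assms(1) \<open>3 \<le> q\<close> assms(2,4) \<open>m \<le> n\<close> qm]
    by simp
qed

end
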